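(* Let $N\in\mathbb{N}$ with $N>2$, $m,M\in(0,1)$ with $m\le M$, and $a_1,\dots,a_N\in[m,M]$. For $i\in[N]$ let \[ M_i=\frac1N\min\Big\{m+(N-1)M,\ (N-2)(a_i-m)+\sum_{j=1}^N a_j\Big\}, \] and for every non-empty $K\subseteq[N]$ let \[ B^{(K)}=\frac{(N-2)m+\sum_{l\in[N]\setminus K}M_l}{2N-2-|K|}. \] Then $m\le B^{(K)}\le M_k$ for all $k\in K$.
   Context: $[N]=\{1,\dots,N\}$. *)

theory Defs
  imports Complex_Main
begin

definition Mi :: "nat \<Rightarrow> real \<Rightarrow> real \<Rightarrow> (nat \<Rightarrow> real) \<Rightarrow> nat \<Rightarrow> real" where
  "Mi N m M a i = (1 / real N) *
     min (m + (real N - 1) * M) ((real N - 2) * (a i - m) + (\<Sum>j\<in>{1..N}. a j))"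

definition BK :: "nat \<Rightarrow> real \<Rightarrow> real \<Rightarrow> (nat \<Rightarrow> real) \<Rightarrow> nat set \<Rightarrow> real" where
  "BK N m M a K = ((real N - 2) * m + (\<Sum>l\<in>{1..N} - K. Mi N m M a l))
                   / (2 * real N - 2 - real (card K))"

end

theory Submission
  imports Defs
begin

(*
  With n = N, D = [N] - K, p = n - 2 and q = |D|, the denominator of B(K) is p + q, so B(K) is
  the average of p copies of m and of the M_l for l in D. Each M_i is the minimum of the cap
  (m + (n-1) M)/n >= m and of L_i = m + ((n-2)(a_i - m) + s)/n, where s = sum_j (a_j - m) >= 0.
  All averaged values therefore lie in [m, cap], giving m <= B(K) <= cap. For B(K) <= L_k with
  k in K, use M_l <= L_l; after subtracting m and multiplying by n the claim becomes
  p sum_D (a_l - m) + q s <= (p + q)(p (a_k - m) + s), true since sum_D (a_l - m) <= s and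
  a_k >= m.
*)

lemma average_le_bound:
  fixes p x z :: real and f :: "'a \<Rightarrow> real"
  assumes "0 < p" "x \<le> z" "\<And>l. l \<in> D \<Longrightarrow> f l \<le> z"
  shows "(p * x + sum f D) / (p + real (card D)) \<le> z"
proof -
  have "p * x \<le> p * z"
    using assms(1,2) by simp
  then have "p * x + sum f D \<le> (p + real (card D)) * z"
    using sum_bounded_above[of D f z, OF assms(3)] by (simp add: algebra_simps)
  then show ?thesis
    using assms(1) by (simp add: pos_divide_le_eq add_pos_nonneg mult.commute)
qed

lemma average_ge_bound:
  fixes p x z :: real and f :: "'a \<Rightarrow> real"
  assumes "0 < p" "z \<le> x" "\<And>l. l \<in> D \<Longrightarrow> z \<le> f l"
  shows "z \<le> (p * x + sum f D) / (p + real (card D))"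
proof -
  have "p * z \<le> p * x"
    using assms(1,2) by simp
  then have "(p + real (card D)) * z \<le> p * x + sum f D"
    using sum_bounded_below[of D z f, OF assms(3)] by (simp add: algebra_simps)
  then show ?thesis
    using assms(1) by (simp add: pos_le_divide_eq add_pos_nonneg mult.commute)
qed

definition Mi_cap :: "nat \<Rightarrow> real \<Rightarrow> real \<Rightarrow> real" where
  "Mi_cap N m M = (m + (real N - 1) * M) / real N"

definition Mi_lin :: "nat \<Rightarrow> real \<Rightarrow> (nat \<Rightarrow> real) \<Rightarrow> nat \<Rightarrow> real" where
  "Mi_lin N m a i = ((real N - 2) * (a i - m) + (\<Sum>j\<in>{1..N}. a j)) / real N"

lemma Mi_eq_min: "Mi N m M a i = min (Mi_cap N m M) (Mi_lin N m a i)"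
  unfolding Mi_def Mi_cap_def Mi_lin_def by (simp add: min_divide_distrib_right)

lemma Mi_lin_eq:
  assumes "N > 0"
  shows "Mi_lin N m a i
    = m + ((real N - 2) * (a i - m) + (\<Sum>j\<in>{1..N}. a j - m)) / real N"
  using assms by (simp add: Mi_lin_def sum_subtractf field_simps)

lemma Mi_cap_ge:
  assumes "N > 0" "m \<le> M"
  shows "m \<le> Mi_cap N m M"
proof -
  have "(real N - 1) * m \<le> (real N - 1) * M"
    using assms by (intro mult_left_mono) auto
  then show ?thesis
    using assms(1) by (simp add: Mi_cap_def pos_le_divide_eq algebra_simps)
qed

lemma Mi_lin_ge:
  assumes "N \<ge> 2" "i \<in> {1..N}" "\<And>j. j \<in> {1..N} \<Longrightarrow> m \<le> a j"
  shows "m \<le> Mi_lin N m a i"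
proof -
  have "0 \<le> (\<Sum>j\<in>{1..N}. a j - m)"
    using assms(3) by (intro sum_nonneg) auto
  moreover have "0 \<le> (real N - 2) * (a i - m)"
    using assms by simp
  ultimately show ?thesis
    using assms(1) by (simp add: Mi_lin_eq)
qed

lemma Mi_ge:
  assumes "N \<ge> 2" "m \<le> M" "i \<in> {1..N}" "\<And>j. j \<in> {1..N} \<Longrightarrow> m \<le> a j"
  shows "m \<le> Mi N m M a i"
  using Mi_cap_ge[of N m M] Mi_lin_ge[of N i m a] assms by (simp add: Mi_eq_min)

lemma BK_as_average:
  assumes "K \<subseteq> {1..N}"
  shows "BK N m M a K = ((real N - 2) * m + (\<Sum>l\<in>{1..N} - K. Mi N m M a l))
                        / ((real N - 2) + real (card ({1..N} - K)))"
proof -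
  have "card K \<le> N"
    using card_mono[OF _ assms] by simp
  then show ?thesis
    using card_Diff_subset[OF finite_subset[OF assms] assms]
    by (simp add: BK_def of_nat_diff)
qed

lemma average_Mi_lin_le:
  assumes "N > 2" "K \<subseteq> {1..N}" "k \<in> K" "\<And>j. j \<in> {1..N} \<Longrightarrow> m \<le> a j"
  shows "((real N - 2) * m + (\<Sum>l\<in>{1..N} - K. Mi_lin N m a l))
           / ((real N - 2) + real (card ({1..N} - K))) \<le> Mi_lin N m a k"
proof -
  define n where "n = real N"
  define D where "D = {1..N} - K"
  define q where "q = real (card D)"
  define b where "b = (\<lambda>j. a j - m)"
  define \<sigma> where "\<sigma> = (\<Sum>j\<in>{1..N}. b j)"
  have n: "n > 2"
    using assms(1) by (simp add: n_def)
  have lin: "Mi_lin N m a l = m + ((n - 2) * b l + \<sigma>) / n" for l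
    using assms(1) by (simp add: Mi_lin_eq n_def b_def \<sigma>_def)
  have "sum b D \<le> \<sigma>"
    unfolding \<sigma>_def D_def using assms(4) by (intro sum_mono2) (auto simp: b_def)
  then have "(n - 2) * sum b D \<le> (n - 2) * \<sigma>"
    using n by simp
  moreover have "0 \<le> b k"
    using assms by (auto simp: b_def)
  then have "0 \<le> ((n - 2) + q) * ((n - 2) * b k)"
    using n by (simp add: q_def)
  ultimately have key: "(n - 2) * sum b D + q * \<sigma> \<le> ((n - 2) + q) * ((n - 2) * b k + \<sigma>)"
    by (simp add: algebra_simps)
  have "(\<Sum>l\<in>D. Mi_lin N m a l) = q * m + ((n - 2) * sum b D + q * \<sigma>) / n"
    by (simp add: lin sum.distrib sum_divide_distrib[symmetric] sum_distrib_left q_def)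
  also have "\<dots> \<le> q * m + ((n - 2) + q) * ((n - 2) * b k + \<sigma>) / n"
    using key n by (simp add: divide_right_mono)
  finally have "(n - 2) * m + (\<Sum>l\<in>D. Mi_lin N m a l) \<le> ((n - 2) + q) * Mi_lin N m a k"
    by (simp add: lin algebra_simps)
  moreover have "0 < (n - 2) + q"
    using n by (simp add: q_def add_pos_nonneg)
  ultimately show ?thesis
    by (simp add: pos_divide_le_eq mult.commute n_def D_def q_def)
qed

theorem lemma3:
  fixes N :: nat and m M :: real and a :: "nat \<Rightarrow> real" and K :: "nat set"
  assumes "N > 2"
    and "0 < m" and "m < 1" and "0 < M" and "M < 1" and "m \<le> M"
    and "\<And>i. i \<in> {1..N} \<Longrightarrow> m \<le> a i \<and> a i \<le> M"
    and "K \<subseteq> {1..N}" and "K \<noteq> {}"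
  shows "m \<le> BK N m M a K \<and> (\<forall>k\<in>K. BK N m M a K \<le> Mi N m M a k)"
proof -
  have a_ge: "\<And>j. j \<in> {1..N} \<Longrightarrow> m \<le> a j"
    using assms(7) by blast
  have p: "0 < real N - 2"
    using assms(1) by simp
  have "m \<le> BK N m M a K"
    unfolding BK_as_average[OF assms(8)]
    using assms(1,6) a_ge by (intro average_ge_bound[OF p]) (auto intro: Mi_ge)
  moreover have "BK N m M a K \<le> Mi_cap N m M"
    unfolding BK_as_average[OF assms(8)]
    using assms(1,6) by (intro average_le_bound[OF p]) (auto simp: Mi_eq_min intro: Mi_cap_ge)
  moreover have "BK N m M a K \<le> Mi_lin N m a k" if "k \<in> K" for k
  proof -
    have "(\<Sum>l\<in>{1..N} - K. Mi N m M a l) \<le> (\<Sum>l\<in>{1..N} - K. Mi_lin N m a l)"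
      by (intro sum_mono) (simp add: Mi_eq_min)
    then have "BK N m M a K \<le> ((real N - 2) * m + (\<Sum>l\<in>{1..N} - K. Mi_lin N m a l))
                                / ((real N - 2) + real (card ({1..N} - K)))"
      unfolding BK_as_average[OF assms(8)] using p by (intro divide_right_mono) auto
    also have "\<dots> \<le> Mi_lin N m a k"
      by (rule average_Mi_lin_le[OF assms(1,8) that a_ge])
    finally show ?thesis .
  qed
  ultimately show ?thesis
    by (simp add: Mi_eq_min)
qed

end
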